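(* Let $\tau$ be a nonnegative bipartite quantum correlation measure satisfying the monogamy relation $\tau(\rho_{X_1|X_2\cdots X_N})\geq \tau(\rho_{X_1X_2})+\cdots+\tau(\rho_{X_1X_N})$ for every multipartite state $\rho_{X_1\cdots X_N}$ (with subsystems possibly formed by grouping several parties). Let $\rho_{A_1A_2\cdots A_n}$ be an $n$-partite state, and let $k\geq 1$, $\frac12\leq p\leq 1$, $r\geq 2$, $0\leq\alpha\leq \frac r2$; put $l=\frac{(1+k)^{\alpha/r}-p^{\alpha/r}}{k^{\alpha/r}}$. Write $\tau_{A_1A_i}=\tau(\rho_{A_1A_i})$ and $\tau_{A_1|A_{j+1}\cdots A_n}=\tau(\rho_{A_1|A_{j+1}\cdots A_n})$ (so $\tau_{A_1|A_n}=\tau_{A_1A_n}$). (1) Let $n\geq 4$ and $2\leq m\leq n-2$. If $k\tau^r_{A_1A_i}\leq \tau^r_{A_1|A_{i+1}\cdots A_n}$ for $i=2,\dots,m$ and $\tau^r_{A_1A_j}\geq k\tau^r_{A_1|A_{j+1}\cdots A_n}$ for $j=m+1,\dots,n-1$, then $$\tau^\alpha_{A_1|A_2\cdots A_n}\geq p^{\alpha/r}\big(\tau^\alpha_{A_1A_2}+l\tau^\alpha_{A_1A_3}+\cdots+l^{m-2}\tau^\alpha_{A_1A_m}\big)+l^m\big[\tau^\alpha_{A_1A_{m+1}}+p^{\alpha/r}\tau^\alpha_{A_1A_{m+2}}+\cdots+p^{(n-m-2)\alpha/r}\tau^\alpha_{A_1A_{n-1}}\big]+l^{m-1}p^{(n-m-1)\alpha/r}\tau^\alpha_{A_1A_n}.$$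 (2) Let $n\geq 3$. If $k\tau^r_{A_1A_i}\leq \tau^r_{A_1|A_{i+1}\cdots A_n}$ for $i=2,\dots,n-1$, then $$\tau^\alpha_{A_1|A_2\cdots A_n}\geq p^{\alpha/r}\big(\tau^\alpha_{A_1A_2}+l\tau^\alpha_{A_1A_3}+\cdots+l^{n-3}\tau^\alpha_{A_1A_{n-1}}\big)+l^{n-2}\tau^\alpha_{A_1A_n}.$$ (3) Let $n\geq 3$. If $\tau^r_{A_1A_j}\geq k\tau^r_{A_1|A_{j+1}\cdots A_n}$ for $j=2,\dots,n-1$, then $$\tau^\alpha_{A_1|A_2\cdots A_n}\geq l\big(\tau^\alpha_{A_1A_2}+p^{\alpha/r}\tau^\alpha_{A_1A_3}+\cdots+p^{(n-3)\alpha/r}\tau^\alpha_{A_1A_{n-1}}\big)+p^{(n-2)\alpha/r}\tau^\alpha_{A_1A_n}.$$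
   Context: $\rho_{A_1A_i}$ is the reduced state of $\rho_{A_1\cdots A_n}$ on $A_1A_i$; $\rho_{A_1|A_{j+1}\cdots A_n}$ is the reduced state on $A_1A_{j+1}\cdots A_n$ regarded as a bipartite state for the bipartition $A_1$ versus $A_{j+1}\cdots A_n$; $\rho_{X_1|X_2\cdots X_N}$ similarly denotes the bipartite cut $X_1$ versus $X_2\cdots X_N$. Examples of such $\tau$ mentioned by the paper are the squared concurrence and the squared convex-roof extended negativity. *)

theory Defs
  imports Complex_Main "HOL-Library.Sublist"
begin

text \<open>A system of N parties with local dimensions
  ds (a list of length N) has Hilbert space of dimension prod_list ds; basis indices are
  ordered as in the Kronecker product (party 0 most significant).\<close>

definition is_state :: "nat list \<Rightarrow> (nat \<Rightarrow> nat \<Rightarrow> complex) \<Rightarrow> bool" where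
  "is_state ds \<rho> \<longleftrightarrow>
     (\<forall>i j. (prod_list ds \<le> i \<or> prod_list ds \<le> j) \<longrightarrow> \<rho> i j = 0) \<and>
     (\<forall>i<prod_list ds. \<forall>j<prod_list ds. \<rho> j i = cnj (\<rho> i j)) \<and>
     (\<forall>v :: nat \<Rightarrow> complex.
        0 \<le> Re (\<Sum>i<prod_list ds. \<Sum>j<prod_list ds. cnj (v i) * \<rho> i j * v j)) \<and>
     (\<Sum>i<prod_list ds. \<rho> i i) = 1"

fun decode :: "nat list \<Rightarrow> nat \<Rightarrow> nat list" where
  "decode [] i = []"
| "decode (d # ds) i = (i div prod_list ds) # decode ds (i mod prod_list ds)"

text \<open>Reduced state on the parties in S (kept in their original order): partial trace
  over the complementary parties.\<close>
definition reduce :: "nat list \<Rightarrow> nat set \<Rightarrow> (nat \<Rightarrow> nat \<Rightarrow> complex) \<Rightarrow> (nat \<Rightarrow> nat \<Rightarrow> complex)" where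
  "reduce ds S \<rho> = (\<lambda>a b.
     if a < prod_list (nths ds S) \<and> b < prod_list (nths ds S) then
       (\<Sum>i<prod_list ds. \<Sum>j<prod_list ds.
          if nths (decode ds i) S = decode (nths ds S) a \<and>
             nths (decode ds j) S = decode (nths ds S) b \<and>
             nths (decode ds i) (- S) = nths (decode ds j) (- S)
          then \<rho> i j else 0)
     else 0)"

text \<open>A bipartite measure tau takes the two local dimensions dA, dB and a state on [dA, dB].\<close>

definition nonneg_measure :: "(nat \<Rightarrow> nat \<Rightarrow> (nat \<Rightarrow> nat \<Rightarrow> complex) \<Rightarrow> real) \<Rightarrow> bool" where
  "nonneg_measure \<tau> \<longleftrightarrow> (\<forall>dA dB \<rho>. is_state [dA, dB] \<rho> \<longrightarrow> 0 \<le> \<tau> dA dB \<rho>)"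

text \<open>Monogamy: for every N-partite state on X_1 ... X_N (each X_i of arbitrary dimension,
  so grouped subsystems are included),
  tau(X_1 | X_2...X_N) >= sum_{i=2}^N tau(X_1 X_i).\<close>
definition monogamous :: "(nat \<Rightarrow> nat \<Rightarrow> (nat \<Rightarrow> nat \<Rightarrow> complex) \<Rightarrow> real) \<Rightarrow> bool" where
  "monogamous \<tau> \<longleftrightarrow>
     (\<forall>ds \<rho>. 2 \<le> length ds \<and> is_state ds \<rho> \<longrightarrow>
        (\<Sum>i\<in>{1..<length ds}. \<tau> (ds ! 0) (ds ! i) (reduce ds {0, i} \<rho>))
          \<le> \<tau> (ds ! 0) (prod_list (tl ds)) \<rho>)"

text \<open>For an n-partite state with parties A_1..A_n stored at positions 0..n-1:
  tpair \<tau> ds \<rho> i = tau(rho_{A_1 A_i})   (1-based i),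
  tcut \<tau> ds \<rho> j = tau(rho_{A_1 | A_{j+1} ... A_n}).\<close>
definition tpair :: "(nat \<Rightarrow> nat \<Rightarrow> (nat \<Rightarrow> nat \<Rightarrow> complex) \<Rightarrow> real) \<Rightarrow> nat list \<Rightarrow> (nat \<Rightarrow> nat \<Rightarrow> complex) \<Rightarrow> nat \<Rightarrow> real" where
  "tpair \<tau> ds \<rho> i = \<tau> (ds ! 0) (ds ! (i - 1)) (reduce ds {0, i - 1} \<rho>)"

definition tcut :: "(nat \<Rightarrow> nat \<Rightarrow> (nat \<Rightarrow> nat \<Rightarrow> complex) \<Rightarrow> real) \<Rightarrow> nat list \<Rightarrow> (nat \<Rightarrow> nat \<Rightarrow> complex) \<Rightarrow> nat \<Rightarrow> real" where
  "tcut \<tau> ds \<rho> j = \<tau> (ds ! 0) (prod_list (drop j ds)) (reduce ds (insert 0 {j..<length ds}) \<rho>)"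

end

(*
  Monogamy applied to the three parties A_1 | A_{j+1} | A_{j+2}...A_n, i.e. to the reduced state
  of A_1 | A_{j+1}...A_n with its tail regrouped into one party, gives
    tau(A_1 A_{j+1}) + tau(A_1 | A_{j+2}...A_n) <= tau(A_1 | A_{j+1}...A_n).
  Since t^r is superadditive for r >= 1, the same holds for the r-th powers. For 0 <= beta <= 1/2
  and k y <= x one has (x + y)^beta >= p^beta y^beta + l x^beta: with s = y/x <= 1/k the function
  (1 + s)^beta - p^beta s^beta is nonincreasing and equals l at s = 1/k. Applied with beta = alpha/r
  this turns every monogamy step into a weighted two-term bound, with the weights (p^beta, l) or
  (l, p^beta) according to which term dominates, and telescoping the steps over j gives all three
  inequalities; (2) and (3) are the cases m = n - 1 and m = 1 of the bound behind (1).
*)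

theory Submission
  imports Defs
begin

section \<open>Elementary inequalities\<close>

lemma powr_superadditive:
  fixes a b r :: real
  assumes a: "0 \<le> a" and b: "0 \<le> b" and r: "1 \<le> r"
  shows "a powr r + b powr r \<le> (a + b) powr r"
proof -
  have le: "x powr r \<le> x * (a + b) powr (r - 1)" if "0 \<le> x" "x \<le> a + b" for x :: real
  proof (cases "x = 0")
    case False
    hence "x powr r = x * x powr (r - 1)" using that by (simp add: powr_diff)
    also have "\<dots> \<le> x * (a + b) powr (r - 1)"
      using that r by (intro mult_left_mono powr_mono2) auto
    finally show ?thesis .
  qed (use r in simp)
  have "a powr r + b powr r \<le> (a + b) * (a + b) powr (r - 1)"
    using le[of a] le[of b] a b by (simp add: distrib_right)
  also have "\<dots> = (a + b) powr r"
    using a b r by (cases "a + b = 0") (auto simp: powr_diff)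
  finally show ?thesis .
qed

lemma powr_le_one_plus_mult:
  fixes b s :: real
  assumes b: "0 \<le> b" "b \<le> 1" and s: "0 \<le> s"
  shows "(1 + s) powr b \<le> 1 + b * s"
proof -
  let ?f = "\<lambda>t. 1 + b * t - (1 + t) powr b"
  have "?f 0 \<le> ?f s"
  proof (rule DERIV_nonneg_imp_nondecreasing[OF s])
    fix x :: real assume x: "0 \<le> x" "x \<le> s"
    have "(1 + x) powr (b - 1) \<le> (1 + x) powr 0"
      using x b by (intro powr_mono) auto
    hence "b * (1 + x) powr (b - 1) \<le> b" using b x by (simp add: mult_left_le)
    moreover have "DERIV ?f x :> b - b * (1 + x) powr (b - 1)"
      using x by (auto intro!: derivative_eq_intros)
    ultimately show "\<exists>y. DERIV ?f x :> y \<and> 0 \<le> y" by auto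
  qed
  thus ?thesis by simp
qed

lemma weight_le_one:
  fixes k p b :: real
  assumes k: "1 \<le> k" and p: "1/2 \<le> p" "p \<le> 1" and b: "0 \<le> b" "b \<le> 1/2"
  shows "((1 + k) powr b - p powr b) / k powr b \<le> 1"
proof -
  have "(1 + k) powr b = k powr b * (1 + 1/k) powr b"
    using k by (simp add: powr_mult[symmetric] distrib_left add.commute)
  also have "\<dots> \<le> k powr b * (1 + b * (1/k))"
    using powr_le_one_plus_mult[of b "1/k"] k b by (intro mult_left_mono) auto
  also have "\<dots> = k powr b + b * k powr (b - 1)"
    using k by (simp add: powr_diff field_simps)
  also have "\<dots> \<le> k powr b + p powr b"
  proof -
    have "k powr (b - 1) \<le> 1" using powr_mono[of "b - 1" 0 k] k b by simp
    hence "b * k powr (b - 1) \<le> 1/2" using b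
      by (metis dual_order.trans mult_left_le)
    also have "1/2 \<le> p powr 1" using p by simp
    also have "p powr 1 \<le> p powr b" using p b by (intro powr_mono') auto
    finally show ?thesis by simp
  qed
  finally show ?thesis using k by (simp add: divide_le_eq)
qed

lemma weighted_powr_antimono:
  fixes s t p b :: real
  assumes s: "0 < s" "s \<le> t" and t: "t \<le> 1" and p: "1/2 \<le> p" and b: "0 \<le> b" "b \<le> 1/2"
  shows "(1 + t) powr b - p powr b * t powr b \<le> (1 + s) powr b - p powr b * s powr b"
proof -
  let ?g = "\<lambda>t. (1 + t) powr b - p powr b * t powr b"
  have "?g t \<le> ?g s"
  proof (rule DERIV_nonpos_imp_nonincreasing[OF s(2)])
    fix u :: real assume u: "s \<le> u" "u \<le> t"
    hence u0: "0 < u" using s by simp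
    have "((1 + u) / u) powr (b - 1) \<le> 2 powr (b - 1)"
      using u0 u t b by (intro powr_mono2') (auto simp: field_simps)
    also have "\<dots> \<le> 2 powr (- b)" using b by (intro powr_mono) auto
    also have "\<dots> = (1/2) powr b" by (simp add: powr_minus powr_divide inverse_eq_divide)
    also have "\<dots> \<le> p powr b" using p b by (intro powr_mono2) auto
    finally have "u powr (b - 1) * ((1 + u) / u) powr (b - 1) \<le> p powr b * u powr (b - 1)"
      by (subst mult.commute) (intro mult_right_mono, auto)
    hence "b * (1 + u) powr (b - 1) \<le> b * (p powr b * u powr (b - 1))"
      using u0 b by (intro mult_left_mono) (auto simp: powr_mult[symmetric])
    moreover have "DERIV ?g u :> b * (1 + u) powr (b - 1) - p powr b * (b * u powr (b - 1))"
      using u0 by (auto intro!: derivative_eq_intros)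
    ultimately show "\<exists>y. DERIV ?g u :> y \<and> y \<le> 0" by (auto simp: algebra_simps)
  qed
  thus ?thesis by simp
qed

lemma powr_add_ge_weighted:
  fixes x y k p b :: real
  assumes y: "0 \<le> y" and xy: "k * y \<le> x" and k: "1 \<le> k" and p: "1/2 \<le> p" "p \<le> 1"
    and b: "0 \<le> b" "b \<le> 1/2"
  shows "p powr b * y powr b + ((1 + k) powr b - p powr b) / k powr b * x powr b \<le> (x + y) powr b"
proof (cases "y = 0")
  case True
  thus ?thesis using mult_right_mono[OF weight_le_one[OF k p b], of "x powr b"] by simp
next
  case False
  hence y: "0 < y" using y by simp
  hence x: "0 < x" using xy k by (smt (verit) mult_pos_pos)
  define s where "s = y / x"
  have s: "0 < s" "s \<le> 1/k" using x y xy k by (auto simp: s_def field_simps)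
  have "1 + 1/k = (1 + k) / k" using k by (simp add: field_simps)
  hence "((1 + k) powr b - p powr b) / k powr b = (1 + 1/k) powr b - p powr b * (1/k) powr b"
    using k by (simp add: powr_divide diff_divide_distrib)
  also have "\<dots> \<le> (1 + s) powr b - p powr b * s powr b"
    using s k p b by (intro weighted_powr_antimono) auto
  finally have "x powr b * (((1 + k) powr b - p powr b) / k powr b)
      \<le> x powr b * ((1 + s) powr b - p powr b * s powr b)"
    by (intro mult_left_mono) auto
  also have "\<dots> = x powr b * (1 + s) powr b - p powr b * (x powr b * s powr b)"
    by (simp add: algebra_simps)
  also have "x powr b * (1 + s) powr b = (x * (1 + s)) powr b"
    using x s by (simp add: powr_mult)
  also have "x * (1 + s) = x + y"
    using x by (simp add: s_def field_simps)
  also have "x powr b * s powr b = y powr b"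
    using x y by (simp add: s_def powr_divide)
  finally show ?thesis by (simp add: algebra_simps)
qed

lemma powr_weighted_le:
  fixes u v w k p r \<alpha> :: real
  assumes u: "0 \<le> u" and v: "0 \<le> v" and uvw: "u + v \<le> w" and kuv: "k * u powr r \<le> v powr r"
    and k: "1 \<le> k" and p: "1/2 \<le> p" "p \<le> 1" and r: "1 \<le> r" and \<alpha>: "0 \<le> \<alpha>" "\<alpha> \<le> r / 2"
  shows "p powr (\<alpha> / r) * u powr \<alpha>
      + ((1 + k) powr (\<alpha> / r) - p powr (\<alpha> / r)) / k powr (\<alpha> / r) * v powr \<alpha> \<le> w powr \<alpha>"
proof -
  define b where "b = \<alpha> / r"
  have b: "0 \<le> b" "b \<le> 1/2" using r \<alpha> by (auto simp: b_def field_simps)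
  have rb: "(x powr r) powr (\<alpha> / r) = x powr \<alpha>" for x using r by (simp add: powr_powr)
  have "p powr b * (u powr r) powr b + ((1 + k) powr b - p powr b) / k powr b * (v powr r) powr b
      \<le> (v powr r + u powr r) powr b"
    using kuv k p b by (intro powr_add_ge_weighted) auto
  also have "\<dots> \<le> ((u + v) powr r) powr b"
    using powr_superadditive[OF u v r] b by (intro powr_mono2) auto
  also have "\<dots> \<le> (w powr r) powr b"
    using u v uvw b r by (intro powr_mono2) auto
  finally show ?thesis unfolding b_def rb .
qed

lemma telescoping_bound:
  fixes E P :: "nat \<Rightarrow> real" and v w :: real
  assumes v: "0 \<le> v" and cq: "c \<le> q"
    and step: "\<And>i. c < i \<Longrightarrow> i \<le> q \<Longrightarrow> w * P i + v * E i \<le> E (i - 1)"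
  shows "w * (\<Sum>i=c+1..q. v ^ (i - c - 1) * P i) + v ^ (q - c) * E q \<le> E c"
  using cq step
proof (induction q rule: dec_induct)
  case base
  thus ?case by simp
next
  case (step q)
  have "v ^ (q - c) * (w * P (Suc q) + v * E (Suc q)) \<le> v ^ (q - c) * E q"
    using step.prems[of "Suc q"] step.hyps v by (intro mult_left_mono) auto
  moreover have "w * (\<Sum>i=c+1..q. v ^ (i - c - 1) * P i) + v ^ (q - c) * E q \<le> E c"
    using step by auto
  ultimately show ?case
    using step.hyps by (simp add: Suc_diff_le algebra_simps)
qed

text \<open>\<open>R i\<close> and \<open>C i\<close> stand for tau(A_1 A_i) and tau(A_1 | A_{i+1}...A_n).\<close>

locale monogamy_chain =
  fixes R C :: "nat \<Rightarrow> real" and n :: nat and k p r \<alpha> l :: real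
  assumes nonneg: "\<And>i. 2 \<le> i \<Longrightarrow> i < n \<Longrightarrow> 0 \<le> R i \<and> 0 \<le> C i"
    and step: "\<And>i. 2 \<le> i \<Longrightarrow> i < n \<Longrightarrow> R i + C i \<le> C (i - 1)"
    and last: "C (n - 1) = R n"
    and k: "1 \<le> k" and p: "1/2 \<le> p" "p \<le> 1" and r: "1 \<le> r" and \<alpha>: "0 \<le> \<alpha>" "\<alpha> \<le> r / 2"
    and l_def: "l = ((1 + k) powr (\<alpha> / r) - p powr (\<alpha> / r)) / k powr (\<alpha> / r)"
begin

lemma l_nonneg: "0 \<le> l"
  using k p r \<alpha> unfolding l_def by (auto intro!: divide_nonneg_nonneg powr_mono2)

lemma pair_small_step:
  assumes "2 \<le> i" "i < n" "k * R i powr r \<le> C i powr r"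
  shows "p powr (\<alpha> / r) * R i powr \<alpha> + l * C i powr \<alpha> \<le> C (i - 1) powr \<alpha>"
  unfolding l_def by (rule powr_weighted_le) (use assms nonneg step k p r \<alpha> in auto)

lemma cut_small_step:
  assumes "2 \<le> i" "i < n" "k * C i powr r \<le> R i powr r"
  shows "l * R i powr \<alpha> + p powr (\<alpha> / r) * C i powr \<alpha> \<le> C (i - 1) powr \<alpha>"
  unfolding l_def by (subst add.commute, rule powr_weighted_le)
    (use assms nonneg step[of i] k p r \<alpha> in \<open>auto simp: add.commute\<close>)

lemma chain_bound:
  assumes m: "1 \<le> m" "m < n"
    and pairs_small: "\<forall>i\<in>{2..m}. k * R i powr r \<le> C i powr r"
    and cuts_small: "\<forall>j\<in>{m+1..n-1}. k * C j powr r \<le> R j powr r"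
  shows "p powr (\<alpha> / r) * (\<Sum>i=2..m. l ^ (i - 2) * R i powr \<alpha>)
      + l ^ m * (\<Sum>j=m+1..n-1. p powr (real (j - m - 1) * \<alpha> / r) * R j powr \<alpha>)
      + l ^ (m - 1) * p powr (real (n - m - 1) * \<alpha> / r) * R n powr \<alpha>
    \<le> C 1 powr \<alpha>"
proof -
  define a where "a = p powr (\<alpha> / r)"
  define E where "E i = C i powr \<alpha>" for i
  define P where "P i = R i powr \<alpha>" for i
  have a_pow: "p powr (real j * \<alpha> / r) = a ^ j" for j
    using p powr_power[of p "\<alpha> / r" j] by (simp add: a_def)
  have pairs_part: "a * (\<Sum>i=2..m. l ^ (i - 2) * P i) + l ^ (m - 1) * E m \<le> E 1"
  proof -
    have "a * (\<Sum>i=1+1..m. l ^ (i - 1 - 1) * P i) + l ^ (m - 1) * E m \<le> E 1"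
      by (rule telescoping_bound)
        (use l_nonneg m pairs_small pair_small_step in \<open>auto simp: a_def E_def P_def\<close>)
    thus ?thesis by (simp add: diff_diff_left numeral_2_eq_2)
  qed
  have cuts_part: "l * (\<Sum>j=m+1..n-1. a ^ (j - m - 1) * P j) + a ^ (n - 1 - m) * E (n - 1) \<le> E m"
    by (rule telescoping_bound)
      (use m cuts_small cut_small_step in \<open>auto simp: a_def E_def P_def\<close>)
  have "E (n - 1) = P n" unfolding E_def P_def last ..
  have "l ^ m * (\<Sum>j=m+1..n-1. a ^ (j - m - 1) * P j) + l ^ (m - 1) * a ^ (n - m - 1) * P n
      = l ^ (m - 1) * (l * (\<Sum>j=m+1..n-1. a ^ (j - m - 1) * P j) + a ^ (n - 1 - m) * E (n - 1))"
    using m \<open>E (n - 1) = P n\<close> by (cases m) (simp_all add: algebra_simps)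
  also have "\<dots> \<le> l ^ (m - 1) * E m"
    using cuts_part l_nonneg by (intro mult_left_mono) auto
  finally show ?thesis
    unfolding a_pow a_def[symmetric] P_def[symmetric] E_def[symmetric] using pairs_part by linarith
qed

lemma chain_bound_pairs_small:
  assumes "3 \<le> n" "\<forall>i\<in>{2..n-1}. k * R i powr r \<le> C i powr r"
  shows "p powr (\<alpha> / r) * (\<Sum>i=2..n-1. l ^ (i - 2) * R i powr \<alpha>) + l ^ (n - 2) * R n powr \<alpha>
    \<le> C 1 powr \<alpha>"
proof -
  have "p powr (\<alpha> / r) * (\<Sum>i=2..n-1. l ^ (i - 2) * R i powr \<alpha>)
      + l ^ (n - 1) * (\<Sum>j=n-1+1..n-1. p powr (real (j - (n - 1) - 1) * \<alpha> / r) * R j powr \<alpha>)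
      + l ^ (n - 1 - 1) * p powr (real (n - (n - 1) - 1) * \<alpha> / r) * R n powr \<alpha> \<le> C 1 powr \<alpha>"
    by (rule chain_bound) (use assms in auto)
  thus ?thesis using p by (simp add: diff_diff_left numeral_2_eq_2)
qed

lemma chain_bound_cuts_small:
  assumes "3 \<le> n" "\<forall>j\<in>{2..n-1}. k * C j powr r \<le> R j powr r"
  shows "l * (\<Sum>j=2..n-1. p powr (real (j - 2) * \<alpha> / r) * R j powr \<alpha>)
      + p powr (real (n - 2) * \<alpha> / r) * R n powr \<alpha> \<le> C 1 powr \<alpha>"
proof -
  have "p powr (\<alpha> / r) * (\<Sum>i=2..1. l ^ (i - 2) * R i powr \<alpha>)
      + l ^ 1 * (\<Sum>j=1+1..n-1. p powr (real (j - 1 - 1) * \<alpha> / r) * R j powr \<alpha>)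
      + l ^ (1 - 1) * p powr (real (n - 1 - 1) * \<alpha> / r) * R n powr \<alpha> \<le> C 1 powr \<alpha>"
    by (rule chain_bound) (use assms in auto)
  thus ?thesis by (simp add: diff_diff_left numeral_2_eq_2)
qed

end

section \<open>Sublists and mixed-radix digits\<close>

lemma nths_eq_iff:
  "length xs = length ys \<Longrightarrow> nths xs A = nths ys A \<longleftrightarrow> (\<forall>t<length xs. t \<in> A \<longrightarrow> xs ! t = ys ! t)"
proof (induct xs arbitrary: ys A)
  case (Cons x xs)
  then obtain y ys' where ys: "ys = y # ys'" "length xs = length ys'" by (cases ys) auto
  have "nths (x # xs) A = nths (y # ys') A \<longleftrightarrow>
        (0 \<in> A \<longrightarrow> x = y) \<and> nths xs {j. Suc j \<in> A} = nths ys' {j. Suc j \<in> A}"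
    by (auto simp: nths_Cons)
  also have "\<dots> \<longleftrightarrow> (0 \<in> A \<longrightarrow> x = y) \<and> (\<forall>t<length xs. Suc t \<in> A \<longrightarrow> xs ! t = ys' ! t)"
    using Cons.hyps[OF ys(2)] by simp
  also have "\<dots> \<longleftrightarrow> (\<forall>t<length (x # xs). t \<in> A \<longrightarrow> (x # xs) ! t = (y # ys') ! t)"
    by (auto simp: less_Suc_eq_0_disj)
  finally show ?case using ys by simp
qed simp

lemma list_all2_nths: "list_all2 R xs ys \<Longrightarrow> list_all2 R (nths xs A) (nths ys A)"
proof (induct xs arbitrary: ys A)
  case (Cons x xs)
  then obtain y ys' where "ys = y # ys'" "R x y" "list_all2 R xs ys'" by (cases ys) auto
  with Cons.hyps show ?case by (simp add: nths_Cons)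
qed simp

lemma nths_cong: "(\<And>t. t < length xs \<Longrightarrow> t \<in> A \<longleftrightarrow> t \<in> B) \<Longrightarrow> nths xs A = nths xs B"
  unfolding nths_def by (intro arg_cong[where f = "map fst"] filter_cong) (auto dest: set_zip_rightD)

lemma nths_singleton_set: "m < length xs \<Longrightarrow> nths xs {m} = [xs ! m]"
proof (induct xs arbitrary: m)
  case (Cons x xs)
  thus ?case by (cases m) (auto simp: nths_Cons)
qed simp

lemma nths_pair: "0 < c \<Longrightarrow> c < length xs \<Longrightarrow> nths xs {0, c} = [xs ! 0, xs ! c]"
proof (cases xs)
  case (Cons x xs')
  assume c: "0 < c" "c < length xs"
  have "{j. Suc j \<in> {0, c}} = {c - 1}" using c by auto
  thus ?thesis using Cons c nths_singleton_set[of "c - 1" xs'] by (simp add: nths_Cons)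
qed simp

lemma nths_cut:
  assumes "0 < c" "c < n" "length xs = n"
  shows "nths xs (insert 0 {c..<n}) = xs ! 0 # drop c xs"
proof (cases xs)
  case (Cons x xs')
  have "{j. Suc j \<in> insert 0 {c..<n}} = {c - 1..<length xs'}" using assms Cons by auto
  moreover have "nths xs' {c - 1..<length xs'} = drop (c - 1) xs'"
    unfolding drop_eq_nths by (rule nths_cong) auto
  ultimately show ?thesis using Cons assms by (simp add: nths_Cons drop_Cons')
qed (use assms in simp)

lemma drop_eq_iff:
  "length xs = length ys \<Longrightarrow> drop m xs = drop m ys \<longleftrightarrow> (\<forall>t<length xs. m \<le> t \<longrightarrow> xs ! t = ys ! t)"
  by (simp add: drop_eq_nths nths_eq_iff)

fun encode :: "nat list \<Rightarrow> nat list \<Rightarrow> nat" where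
  "encode [] xs = 0"
| "encode (d # ds) xs = hd xs * prod_list ds + encode ds (tl xs)"

lemma length_decode [simp]: "length (decode ds i) = length ds"
  by (induct ds arbitrary: i) auto

lemma decode_less: "i < prod_list ds \<Longrightarrow> list_all2 (<) (decode ds i) ds"
proof (induct ds arbitrary: i)
  case (Cons d ds)
  hence "0 < prod_list ds" by (cases "prod_list ds = 0") auto
  with Cons show ?case by (simp add: div_less_iff_less_mult mult.commute)
qed simp

lemma encode_decode: "i < prod_list ds \<Longrightarrow> encode ds (decode ds i) = i"
proof (induct ds arbitrary: i)
  case (Cons d ds)
  hence "0 < prod_list ds" by (cases "prod_list ds = 0") auto
  with Cons.hyps show ?case by simp
qed simp

lemma encode_less: "list_all2 (<) xs ds \<Longrightarrow> encode ds xs < prod_list ds"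
proof (induct ds arbitrary: xs)
  case (Cons d ds)
  then obtain x xs' where xs: "xs = x # xs'" "x < d" "list_all2 (<) xs' ds"
    by (cases xs) auto
  have "x * prod_list ds + encode ds xs' < (x + 1) * prod_list ds"
    using Cons.hyps[OF xs(3)] by simp
  also have "\<dots> \<le> d * prod_list ds" using xs(2) by (intro mult_right_mono) auto
  finally show ?case using xs(1) by simp
qed simp

lemma decode_encode: "list_all2 (<) xs ds \<Longrightarrow> decode ds (encode ds xs) = xs"
proof (induct ds arbitrary: xs)
  case (Cons d ds)
  then obtain x xs' where xs: "xs = x # xs'" "list_all2 (<) xs' ds"
    by (cases xs) auto
  with Cons.hyps[OF xs(2)] encode_less[OF xs(2)] show ?case by simp
qed simp

lemma encode_inj:
  "list_all2 (<) xs ds \<Longrightarrow> list_all2 (<) ys ds \<Longrightarrow> encode ds xs = encode ds ys \<Longrightarrow> xs = ys"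
  by (metis decode_encode)

lemma decode_inj: "i < prod_list ds \<Longrightarrow> j < prod_list ds \<Longrightarrow> decode ds i = decode ds j \<Longrightarrow> i = j"
  by (metis encode_decode)

definition kept_index :: "nat list \<Rightarrow> nat set \<Rightarrow> nat \<Rightarrow> nat" where
  "kept_index ds S i = encode (nths ds S) (nths (decode ds i) S)"

definition traced_digits :: "nat list \<Rightarrow> nat set \<Rightarrow> nat \<Rightarrow> nat list" where
  "traced_digits ds S i = nths (decode ds i) (- S)"

lemma kept_index_less: "i < prod_list ds \<Longrightarrow> kept_index ds S i < prod_list (nths ds S)"
  unfolding kept_index_def by (intro encode_less list_all2_nths decode_less)

lemma decode_kept_index:
  "i < prod_list ds \<Longrightarrow> decode (nths ds S) (kept_index ds S i) = nths (decode ds i) S"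
  unfolding kept_index_def by (intro decode_encode list_all2_nths decode_less)

lemma traced_digits_eq_iff:
  "traced_digits ds S i = traced_digits ds S j \<longleftrightarrow>
     (\<forall>t<length ds. t \<notin> S \<longrightarrow> decode ds i ! t = decode ds j ! t)"
  by (simp add: traced_digits_def nths_eq_iff)

lemma kept_traced_inj:
  assumes "i < prod_list ds" "j < prod_list ds"
    and "kept_index ds S i = kept_index ds S j" "traced_digits ds S i = traced_digits ds S j"
  shows "i = j"
proof -
  have "nths (decode ds i) S = nths (decode ds j) S"
    using assms(1-3) by (metis decode_kept_index)
  hence "\<forall>t<length ds. t \<in> S \<longrightarrow> decode ds i ! t = decode ds j ! t"
    by (simp add: nths_eq_iff)
  with assms(4) have "decode ds i = decode ds j"
    unfolding traced_digits_eq_iff by (intro nth_equalityI) auto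
  thus ?thesis using assms(1,2) decode_inj by blast
qed

section \<open>Partial traces\<close>

text \<open>An index \<open>i < P\<close> is split into a kept part \<open>\<pi> i\<close> and a traced-out part \<open>g i\<close>;
  \<open>ptrace P \<pi> g \<rho>\<close> is the partial trace of \<open>\<rho>\<close> over the traced-out part.\<close>

definition ptrace ::
  "nat \<Rightarrow> (nat \<Rightarrow> nat) \<Rightarrow> (nat \<Rightarrow> 'a) \<Rightarrow> (nat \<Rightarrow> nat \<Rightarrow> complex) \<Rightarrow> nat \<Rightarrow> nat \<Rightarrow> complex"
where
  "ptrace P \<pi> g \<rho> a b = (\<Sum>i<P. \<Sum>j<P. if \<pi> i = a \<and> \<pi> j = b \<and> g i = g j then \<rho> i j else 0)"

lemma sum_swap_pairs:
  "(\<Sum>x\<in>X. \<Sum>y\<in>Y. \<Sum>i\<in>I. \<Sum>j\<in>J. F x y i j) = (\<Sum>i\<in>I. \<Sum>j\<in>J. \<Sum>x\<in>X. \<Sum>y\<in>Y. F x y i j)"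
proof -
  have "(\<Sum>x\<in>X. \<Sum>y\<in>Y. \<Sum>i\<in>I. \<Sum>j\<in>J. F x y i j) = (\<Sum>x\<in>X. \<Sum>i\<in>I. \<Sum>y\<in>Y. \<Sum>j\<in>J. F x y i j)"
    by (rule sum.cong[OF refl], rule sum.swap)
  also have "\<dots> = (\<Sum>i\<in>I. \<Sum>x\<in>X. \<Sum>j\<in>J. \<Sum>y\<in>Y. F x y i j)"
    by (subst sum.swap, rule sum.cong[OF refl], rule sum.cong[OF refl], rule sum.swap)
  also have "\<dots> = (\<Sum>i\<in>I. \<Sum>j\<in>J. \<Sum>x\<in>X. \<Sum>y\<in>Y. F x y i j)"
    by (rule sum.cong[OF refl], rule sum.swap)
  finally show ?thesis .
qed

lemma sum_sum_mult_ptrace: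
  assumes \<pi>: "\<forall>i<P. \<pi> i < Q"
  shows "(\<Sum>a<Q. \<Sum>b<Q. f a b * ptrace P \<pi> g \<rho> a b)
       = (\<Sum>i<P. \<Sum>j<P. if g i = g j then f (\<pi> i) (\<pi> j) * \<rho> i j else 0)"
proof -
  have delta: "(\<Sum>a<Q. \<Sum>b<Q. if k = a \<and> l = b then F a b else 0) = F k l"
    if "k < Q" "l < Q" for k l and F :: "nat \<Rightarrow> nat \<Rightarrow> complex"
    using that by (subst sum.swap) (simp add: if_if_eq_conj[symmetric])
  let ?F = "\<lambda>a b i j. if \<pi> i = a \<and> \<pi> j = b \<and> g i = g j then f a b * \<rho> i j else 0"
  have "(\<Sum>a<Q. \<Sum>b<Q. f a b * ptrace P \<pi> g \<rho> a b) = (\<Sum>a<Q. \<Sum>b<Q. \<Sum>i<P. \<Sum>j<P. ?F a b i j)"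
    unfolding ptrace_def sum_distrib_left by (intro sum.cong refl) simp
  also have "\<dots> = (\<Sum>i<P. \<Sum>j<P. \<Sum>a<Q. \<Sum>b<Q. ?F a b i j)"
    by (rule sum_swap_pairs)
  also have "\<dots> = (\<Sum>i<P. \<Sum>j<P. if g i = g j then f (\<pi> i) (\<pi> j) * \<rho> i j else 0)"
    using \<pi> by (intro sum.cong refl) (simp add: delta)
  finally show ?thesis .
qed

lemma ptrace_hermitian:
  assumes herm: "\<forall>i<P. \<forall>j<P. \<rho> j i = cnj (\<rho> i j)"
  shows "ptrace P \<pi> g \<rho> b a = cnj (ptrace P \<pi> g \<rho> a b)"
proof -
  have "cnj (ptrace P \<pi> g \<rho> a b)
      = (\<Sum>i<P. \<Sum>j<P. if \<pi> i = a \<and> \<pi> j = b \<and> g i = g j then \<rho> j i else 0)"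
    unfolding ptrace_def cnj_sum
  proof (intro sum.cong refl)
    fix i j assume "i \<in> {..<P}" "j \<in> {..<P}"
    hence "\<rho> j i = cnj (\<rho> i j)" using herm by blast
    thus "cnj (if \<pi> i = a \<and> \<pi> j = b \<and> g i = g j then \<rho> i j else 0)
        = (if \<pi> i = a \<and> \<pi> j = b \<and> g i = g j then \<rho> j i else 0)" by simp
  qed
  also have "\<dots> = ptrace P \<pi> g \<rho> b a"
    unfolding ptrace_def by (subst sum.swap) (intro sum.cong refl, auto)
  finally show ?thesis by simp
qed

lemma ptrace_psd:
  assumes \<pi>: "\<forall>i<P. \<pi> i < Q"
    and psd: "\<forall>w. 0 \<le> Re (\<Sum>i<P. \<Sum>j<P. cnj (w i) * \<rho> i j * w j)"
  shows "0 \<le> Re (\<Sum>a<Q. \<Sum>b<Q. cnj (v a) * ptrace P \<pi> g \<rho> a b * v b)"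
proof -
  \<comment> \<open>the form splits into one quadratic form of \<open>\<rho>\<close> per value \<open>c\<close> of the traced-out part\<close>
  define w where "w c i = (if g i = c then v (\<pi> i) else 0)" for c i
  have "(\<Sum>a<Q. \<Sum>b<Q. cnj (v a) * ptrace P \<pi> g \<rho> a b * v b)
      = (\<Sum>a<Q. \<Sum>b<Q. (cnj (v a) * v b) * ptrace P \<pi> g \<rho> a b)"
    by (simp add: ac_simps)
  also have "\<dots> = (\<Sum>i<P. \<Sum>j<P. if g i = g j then cnj (v (\<pi> i)) * v (\<pi> j) * \<rho> i j else 0)"
    by (rule sum_sum_mult_ptrace[OF \<pi>])
  also have "\<dots> = (\<Sum>i<P. \<Sum>j<P. \<Sum>c\<in>g ` {..<P}. cnj (w c i) * \<rho> i j * w c j)"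
    by (intro sum.cong refl) (auto simp: w_def if_distrib cong: if_cong)
  also have "\<dots> = (\<Sum>c\<in>g ` {..<P}. \<Sum>i<P. \<Sum>j<P. cnj (w c i) * \<rho> i j * w c j)"
    by (subst sum.swap, rule sum.cong[OF refl], rule sum.swap)
  finally show ?thesis
    using psd by (simp add: Re_sum sum_nonneg)
qed

lemma ptrace_trace:
  assumes \<pi>: "\<forall>i<P. \<pi> i < Q"
    and inj: "\<And>i j. i < P \<Longrightarrow> j < P \<Longrightarrow> \<pi> i = \<pi> j \<Longrightarrow> g i = g j \<Longrightarrow> i = j"
  shows "(\<Sum>a<Q. ptrace P \<pi> g \<rho> a a) = (\<Sum>i<P. \<rho> i i)"
proof -
  have "(\<Sum>a<Q. ptrace P \<pi> g \<rho> a a) = (\<Sum>a<Q. \<Sum>b<Q. of_bool (a = b) * ptrace P \<pi> g \<rho> a b)"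
    by simp
  also have "\<dots> = (\<Sum>i<P. \<Sum>j<P. if g i = g j then of_bool (\<pi> i = \<pi> j) * \<rho> i j else 0)"
    by (rule sum_sum_mult_ptrace[OF \<pi>])
  also have "\<dots> = (\<Sum>i<P. \<Sum>j<P. if i = j then \<rho> i j else 0)"
    using inj by (intro sum.cong refl) auto
  finally show ?thesis by simp
qed

lemma ptrace_ptrace:
  assumes \<pi>: "\<forall>i<P. \<pi> i < Q"
  shows "ptrace Q \<pi>' g' (ptrace P \<pi> g \<rho>) = ptrace P (\<pi>' \<circ> \<pi>) (\<lambda>i. (g' (\<pi> i), g i)) \<rho>"
proof (intro ext)
  fix x y
  have "ptrace Q \<pi>' g' (ptrace P \<pi> g \<rho>) x y
      = (\<Sum>a<Q. \<Sum>b<Q. of_bool (\<pi>' a = x \<and> \<pi>' b = y \<and> g' a = g' b) * ptrace P \<pi> g \<rho> a b)"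
    unfolding ptrace_def[of Q \<pi>' g'] by (intro sum.cong refl) simp
  also have "\<dots> = (\<Sum>i<P. \<Sum>j<P. if g i = g j
      then of_bool (\<pi>' (\<pi> i) = x \<and> \<pi>' (\<pi> j) = y \<and> g' (\<pi> i) = g' (\<pi> j)) * \<rho> i j else 0)"
    by (rule sum_sum_mult_ptrace[OF \<pi>])
  also have "\<dots> = ptrace P (\<pi>' \<circ> \<pi>) (\<lambda>i. (g' (\<pi> i), g i)) \<rho> x y"
    unfolding ptrace_def by (intro sum.cong refl) auto
  finally show "ptrace Q \<pi>' g' (ptrace P \<pi> g \<rho>) x y
      = ptrace P (\<pi>' \<circ> \<pi>) (\<lambda>i. (g' (\<pi> i), g i)) \<rho> x y" .
qed

lemma ptrace_cong:
  assumes "\<forall>i<P. \<pi> i = \<pi>' i" and "\<forall>i<P. \<forall>j<P. g i = g j \<longleftrightarrow> g' i = g' j"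
  shows "ptrace P \<pi> g \<rho> = ptrace P \<pi>' g' \<rho>"
proof (intro ext)
  fix a b
  have "(if \<pi> i = a \<and> \<pi> j = b \<and> g i = g j then \<rho> i j else 0)
      = (if \<pi>' i = a \<and> \<pi>' j = b \<and> g' i = g' j then \<rho> i j else 0)" if "i < P" "j < P" for i j
    using assms that by simp
  thus "ptrace P \<pi> g \<rho> a b = ptrace P \<pi>' g' \<rho> a b"
    unfolding ptrace_def by (intro sum.cong refl) simp
qed

lemma reduce_eq_ptrace:
  "reduce ds S \<rho> a b =
     (if a < prod_list (nths ds S) \<and> b < prod_list (nths ds S)
      then ptrace (prod_list ds) (kept_index ds S) (traced_digits ds S) \<rho> a b else 0)"
proof -
  have kept_iff: "nths (decode ds i) S = decode (nths ds S) a \<longleftrightarrow> kept_index ds S i = a"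
    if "i < prod_list ds" "a < prod_list (nths ds S)" for i a
    using that decode_kept_index[OF that(1)] kept_index_less[OF that(1)] decode_inj by metis
  show ?thesis
    unfolding reduce_def ptrace_def traced_digits_def
    by (auto simp: kept_iff intro!: sum.cong)
qed

lemma is_state_cong: "prod_list ds = prod_list ds' \<Longrightarrow> is_state ds = is_state ds'"
  by (simp add: is_state_def fun_eq_iff)

lemma is_state_reduce:
  assumes "is_state ds \<rho>"
  shows "is_state (nths ds S) (reduce ds S \<rho>)"
proof -
  let ?P = "prod_list ds" and ?Q = "prod_list (nths ds S)"
  let ?tr = "ptrace ?P (kept_index ds S) (traced_digits ds S) \<rho>"
  have kept: "\<forall>i<?P. kept_index ds S i < ?Q" by (simp add: kept_index_less)
  from assms have herm: "\<forall>i<?P. \<forall>j<?P. \<rho> j i = cnj (\<rho> i j)"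
    and psd: "\<forall>v. 0 \<le> Re (\<Sum>i<?P. \<Sum>j<?P. cnj (v i) * \<rho> i j * v j)"
    and tr: "(\<Sum>i<?P. \<rho> i i) = 1"
    unfolding is_state_def by blast+
  have "\<forall>a b. ?Q \<le> a \<or> ?Q \<le> b \<longrightarrow> reduce ds S \<rho> a b = 0"
    by (simp add: reduce_eq_ptrace)
  moreover have "\<forall>a<?Q. \<forall>b<?Q. reduce ds S \<rho> b a = cnj (reduce ds S \<rho> a b)"
    by (simp add: reduce_eq_ptrace, intro allI impI ptrace_hermitian[OF herm])
  moreover have "\<forall>v. 0 \<le> Re (\<Sum>a<?Q. \<Sum>b<?Q. cnj (v a) * reduce ds S \<rho> a b * v b)"
  proof
    fix v :: "nat \<Rightarrow> complex"
    have "(\<Sum>a<?Q. \<Sum>b<?Q. cnj (v a) * reduce ds S \<rho> a b * v b)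
        = (\<Sum>a<?Q. \<Sum>b<?Q. cnj (v a) * ?tr a b * v b)"
      by (simp add: reduce_eq_ptrace)
    thus "0 \<le> Re (\<Sum>a<?Q. \<Sum>b<?Q. cnj (v a) * reduce ds S \<rho> a b * v b)"
      using ptrace_psd[OF kept psd] by simp
  qed
  moreover have "(\<Sum>a<?Q. reduce ds S \<rho> a a) = 1"
    using ptrace_trace[OF kept, of "traced_digits ds S"] kept_traced_inj tr
    by (simp add: reduce_eq_ptrace)
  ultimately show ?thesis
    unfolding is_state_def by blast
qed

lemma reduce_reduce:
  assumes dims: "prod_list ds' = prod_list (nths ds T)" "prod_list (nths ds' S') = prod_list (nths ds S)"
    and kept: "\<And>i. i < prod_list ds \<Longrightarrow> kept_index ds' S' (kept_index ds T i) = kept_index ds S i"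
    and traced: "\<And>i j. i < prod_list ds \<Longrightarrow> j < prod_list ds \<Longrightarrow>
      traced_digits ds' S' (kept_index ds T i) = traced_digits ds' S' (kept_index ds T j)
        \<and> traced_digits ds T i = traced_digits ds T j
      \<longleftrightarrow> traced_digits ds S i = traced_digits ds S j"
  shows "reduce ds' S' (reduce ds T \<rho>) = reduce ds S \<rho>"
proof (intro ext)
  fix a b
  let ?Q = "prod_list ds'"
  have "ptrace ?Q (kept_index ds' S') (traced_digits ds' S') (reduce ds T \<rho>)
      = ptrace ?Q (kept_index ds' S') (traced_digits ds' S')
          (ptrace (prod_list ds) (kept_index ds T) (traced_digits ds T) \<rho>)"
    unfolding ptrace_def[of ?Q] by (intro ext sum.cong refl) (simp add: reduce_eq_ptrace dims(1))
  also have "\<dots> = ptrace (prod_list ds) (kept_index ds' S' \<circ> kept_index ds T)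
      (\<lambda>i. (traced_digits ds' S' (kept_index ds T i), traced_digits ds T i)) \<rho>"
    by (rule ptrace_ptrace) (simp add: kept_index_less dims(1))
  also have "\<dots> = ptrace (prod_list ds) (kept_index ds S) (traced_digits ds S) \<rho>"
    by (rule ptrace_cong) (use kept traced in auto)
  finally show "reduce ds' S' (reduce ds T \<rho>) a b = reduce ds S \<rho> a b"
    unfolding reduce_eq_ptrace[of ds' S' "reduce ds T \<rho>"] reduce_eq_ptrace[of ds S \<rho>] dims(2)
    by simp
qed

section \<open>Monogamy along the cuts\<close>

text \<open>Party A_j sits at position \<open>j - 1\<close>. For \<open>0 < c\<close>, \<open>cut_parties\<close> are A_1, A_{c+1}, ..., A_n,
  and \<open>cut_dims\<close> regards their state as a state of the three parties A_1 | A_{c+1} | A_{c+2}...A_n.\<close>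

context
  fixes ds :: "nat list" and c :: nat
  assumes c: "0 < c" "Suc c < length ds"
begin

abbreviation "cut_parties \<equiv> insert 0 {c..<length ds}"
abbreviation "cut_dims \<equiv> [ds ! 0, ds ! c, prod_list (drop (Suc c) ds)]"

lemma nths_cut_Suc:
  "length xs = length ds \<Longrightarrow> nths xs cut_parties = xs ! 0 # xs ! c # drop (Suc c) xs"
  using c nths_cut[of c "length ds" xs] by (simp add: Cons_nth_drop_Suc)

lemma decode_kept_index_cut:
  assumes i: "i < prod_list ds"
  shows "decode cut_dims (kept_index ds cut_parties i)
       = [decode ds i ! 0, decode ds i ! c, encode (drop (Suc c) ds) (drop (Suc c) (decode ds i))]"
proof -
  let ?x = "decode ds i"
  have valid: "list_all2 (<) ?x ds" using decode_less[OF i] .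
  have "0 < length ds" using c by linarith
  have "kept_index ds cut_parties i
      = encode cut_dims [?x ! 0, ?x ! c, encode (drop (Suc c) ds) (drop (Suc c) ?x)]"
    unfolding kept_index_def by (simp add: nths_cut_Suc algebra_simps)
  moreover have "list_all2 (<) [?x ! 0, ?x ! c, encode (drop (Suc c) ds) (drop (Suc c) ?x)] cut_dims"
    using c list_all2_nthD2[OF valid \<open>0 < length ds\<close>] list_all2_nthD2[OF valid, of c]
    by (simp add: encode_less valid)
  ultimately show ?thesis by (metis decode_encode)
qed

lemma reduce_cut_pair:
  "reduce cut_dims {0, 1} (reduce ds cut_parties \<rho>) = reduce ds {0, c} \<rho>"
proof (rule reduce_reduce)
  show "prod_list cut_dims = prod_list (nths ds cut_parties)"
    by (simp add: nths_cut_Suc)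
  show "prod_list (nths cut_dims {0, 1}) = prod_list (nths ds {0, c})"
    using c by (simp add: nths_pair nths_Cons)
next
  fix i j assume i: "i < prod_list ds" and j: "j < prod_list ds"
  show "kept_index cut_dims {0, 1} (kept_index ds cut_parties i) = kept_index ds {0, c} i"
    unfolding kept_index_def[of _ "{0, 1}"] decode_kept_index_cut[OF i]
    using c by (simp add: kept_index_def nths_pair nths_Cons)
  have "traced_digits cut_dims {0, 1} (kept_index ds cut_parties i)
      = traced_digits cut_dims {0, 1} (kept_index ds cut_parties j)
      \<longleftrightarrow> drop (Suc c) (decode ds i) = drop (Suc c) (decode ds j)"
    unfolding traced_digits_def decode_kept_index_cut[OF i] decode_kept_index_cut[OF j]
    using list_all2_dropI[OF decode_less[OF i], of "Suc c"]
      list_all2_dropI[OF decode_less[OF j], of "Suc c"]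
    by (auto simp: nths_Cons dest: encode_inj)
  thus "traced_digits cut_dims {0, 1} (kept_index ds cut_parties i)
      = traced_digits cut_dims {0, 1} (kept_index ds cut_parties j)
      \<and> traced_digits ds cut_parties i = traced_digits ds cut_parties j
      \<longleftrightarrow> traced_digits ds {0, c} i = traced_digits ds {0, c} j"
    by (auto simp: traced_digits_eq_iff drop_eq_iff)
qed

lemma reduce_cut_rest:
  "reduce cut_dims {0, 2} (reduce ds cut_parties \<rho>) = reduce ds (insert 0 {Suc c..<length ds}) \<rho>"
proof (rule reduce_reduce)
  show "prod_list cut_dims = prod_list (nths ds cut_parties)"
    by (simp add: nths_cut_Suc)
  show "prod_list (nths cut_dims {0, 2})
      = prod_list (nths ds (insert 0 {Suc c..<length ds}))"
    using c by (simp add: nths_cut nths_Cons)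
next
  fix i j assume i: "i < prod_list ds" and j: "j < prod_list ds"
  show "kept_index cut_dims {0, 2}
      (kept_index ds cut_parties i) = kept_index ds (insert 0 {Suc c..<length ds}) i"
    unfolding kept_index_def[of _ "{0, 2}"] decode_kept_index_cut[OF i]
    using c by (simp add: kept_index_def nths_cut nths_Cons)
  have "traced_digits cut_dims {0, 2} (kept_index ds cut_parties i)
      = traced_digits cut_dims {0, 2} (kept_index ds cut_parties j)
      \<longleftrightarrow> decode ds i ! c = decode ds j ! c"
    unfolding traced_digits_def decode_kept_index_cut[OF i] decode_kept_index_cut[OF j]
    by (simp add: nths_Cons)
  moreover have "(\<forall>t<length ds. t \<notin> insert 0 {Suc c..<length ds} \<longrightarrow> P t)
      \<longleftrightarrow> P c \<and> (\<forall>t<length ds. t \<notin> cut_parties \<longrightarrow> P t)" for P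
    using c by (auto simp: not_less_eq_eq le_less)
  ultimately show "traced_digits cut_dims {0, 2} (kept_index ds cut_parties i)
      = traced_digits cut_dims {0, 2} (kept_index ds cut_parties j)
      \<and> traced_digits ds cut_parties i = traced_digits ds cut_parties j
      \<longleftrightarrow> traced_digits ds (insert 0 {Suc c..<length ds}) i
        = traced_digits ds (insert 0 {Suc c..<length ds}) j"
    by (simp add: traced_digits_eq_iff)
qed

end

lemma tpair_nonneg:
  assumes "nonneg_measure \<tau>" "is_state ds \<rho>" "2 \<le> i" "i \<le> length ds"
  shows "0 \<le> tpair \<tau> ds \<rho> i"
proof -
  have "is_state (nths ds {0, i - 1}) (reduce ds {0, i - 1} \<rho>)"
    using assms(2) by (rule is_state_reduce)
  hence "is_state [ds ! 0, ds ! (i - 1)] (reduce ds {0, i - 1} \<rho>)"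
    using assms(3,4) by (simp add: nths_pair)
  thus ?thesis using assms(1) unfolding nonneg_measure_def tpair_def by blast
qed

lemma tcut_nonneg:
  assumes "nonneg_measure \<tau>" "is_state ds \<rho>" "0 < c" "c < length ds"
  shows "0 \<le> tcut \<tau> ds \<rho> c"
proof -
  have "is_state (nths ds (insert 0 {c..<length ds})) (reduce ds (insert 0 {c..<length ds}) \<rho>)"
    using assms(2) by (rule is_state_reduce)
  moreover have "nths ds (insert 0 {c..<length ds}) = ds ! 0 # drop c ds"
    using assms(3,4) by (simp add: nths_cut)
  moreover have "is_state (ds ! 0 # drop c ds) = is_state [ds ! 0, prod_list (drop c ds)]"
    by (rule is_state_cong) simp
  ultimately have "is_state [ds ! 0, prod_list (drop c ds)] (reduce ds (insert 0 {c..<length ds}) \<rho>)"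
    by simp
  thus ?thesis using assms(1) unfolding nonneg_measure_def tcut_def by blast
qed

lemma tcut_last:
  assumes "2 \<le> length ds"
  shows "tcut \<tau> ds \<rho> (length ds - 1) = tpair \<tau> ds \<rho> (length ds)"
proof -
  have "drop (length ds - 1) ds = [ds ! (length ds - 1)]"
    using assms Cons_nth_drop_Suc[of "length ds - 1" ds] by simp
  moreover have "insert 0 {length ds - 1..<length ds} = {0, length ds - 1}"
    using assms by auto
  ultimately show ?thesis by (simp add: tpair_def tcut_def)
qed

lemma tpair_add_tcut_le:
  assumes mono: "monogamous \<tau>" and state: "is_state ds \<rho>" and c: "0 < c" "Suc c < length ds"
  shows "tpair \<tau> ds \<rho> (Suc c) + tcut \<tau> ds \<rho> (Suc c) \<le> tcut \<tau> ds \<rho> c"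
proof -
  define ds' where "ds' = [ds ! 0, ds ! c, prod_list (drop (Suc c) ds)]"
  define \<sigma> where "\<sigma> = reduce ds (insert 0 {c..<length ds}) \<rho>"
  let ?\<tau>' = "\<lambda>i. \<tau> (ds' ! 0) (ds' ! i) (reduce ds' {0, i} \<sigma>)"
  have "prod_list (nths ds (insert 0 {c..<length ds})) = prod_list ds'"
    using c by (simp add: ds'_def nths_cut_Suc)
  hence "is_state ds' \<sigma>"
    using is_state_reduce[OF state] is_state_cong by (metis \<sigma>_def)
  moreover have "2 \<le> length ds'" by (simp add: ds'_def)
  ultimately have monogamy: "(\<Sum>i\<in>{1..<length ds'}. ?\<tau>' i) \<le> \<tau> (ds' ! 0) (prod_list (tl ds')) \<sigma>"
    using mono unfolding monogamous_def by blast
  have "{1..<length ds'} = {1, 2}" by (auto simp: ds'_def)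
  hence "(\<Sum>i\<in>{1..<length ds'}. ?\<tau>' i) = ?\<tau>' 1 + ?\<tau>' 2" by simp
  also have "?\<tau>' 1 = tpair \<tau> ds \<rho> (Suc c)"
    using reduce_cut_pair[OF c, of \<rho>] by (simp add: tpair_def ds'_def \<sigma>_def)
  also have "?\<tau>' 2 = tcut \<tau> ds \<rho> (Suc c)"
    using reduce_cut_rest[OF c, of \<rho>] by (simp add: tcut_def ds'_def \<sigma>_def)
  finally have "tpair \<tau> ds \<rho> (Suc c) + tcut \<tau> ds \<rho> (Suc c) \<le> \<tau> (ds' ! 0) (prod_list (tl ds')) \<sigma>"
    using monogamy by simp
  also have "\<dots> = tcut \<tau> ds \<rho> c"
    using c by (simp add: tcut_def ds'_def \<sigma>_def Cons_nth_drop_Suc[of c ds, symmetric])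
  finally show ?thesis .
qed

theorem corollary1:
  fixes \<tau> :: "nat \<Rightarrow> nat \<Rightarrow> (nat \<Rightarrow> nat \<Rightarrow> complex) \<Rightarrow> real"
    and ds :: "nat list" and \<rho> :: "nat \<Rightarrow> nat \<Rightarrow> complex"
    and n m :: nat and k p r \<alpha> l :: real
  assumes nonneg: "nonneg_measure \<tau>"
    and mono: "monogamous \<tau>"
    and state: "is_state ds \<rho>" and len: "length ds = n"
    and k: "1 \<le> k" and p: "1/2 \<le> p" "p \<le> 1" and r: "2 \<le> r"
    and \<alpha>: "0 \<le> \<alpha>" "\<alpha> \<le> r / 2"
    and l_def: "l = ((1 + k) powr (\<alpha> / r) - p powr (\<alpha> / r)) / k powr (\<alpha> / r)"
  shows
   "(4 \<le> n \<and> 2 \<le> m \<and> m \<le> n - 2 \<and>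
     (\<forall>i\<in>{2..m}. k * tpair \<tau> ds \<rho> i powr r \<le> tcut \<tau> ds \<rho> i powr r) \<and>
     (\<forall>j\<in>{m+1..n-1}. k * tcut \<tau> ds \<rho> j powr r \<le> tpair \<tau> ds \<rho> j powr r) \<longrightarrow>
     tcut \<tau> ds \<rho> 1 powr \<alpha> \<ge>
        p powr (\<alpha> / r) * (\<Sum>i=2..m. l ^ (i - 2) * tpair \<tau> ds \<rho> i powr \<alpha>)
      + l ^ m * (\<Sum>j=m+1..n-1. p powr (real (j - m - 1) * \<alpha> / r) * tpair \<tau> ds \<rho> j powr \<alpha>)
      + l ^ (m - 1) * p powr (real (n - m - 1) * \<alpha> / r) * tpair \<tau> ds \<rho> n powr \<alpha>)
  \<and>
   (3 \<le> n \<and> (\<forall>i\<in>{2..n-1}. k * tpair \<tau> ds \<rho> i powr r \<le> tcut \<tau> ds \<rho> i powr r) \<longrightarrow>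
     tcut \<tau> ds \<rho> 1 powr \<alpha> \<ge>
        p powr (\<alpha> / r) * (\<Sum>i=2..n-1. l ^ (i - 2) * tpair \<tau> ds \<rho> i powr \<alpha>)
      + l ^ (n - 2) * tpair \<tau> ds \<rho> n powr \<alpha>)
  \<and>
   (3 \<le> n \<and> (\<forall>j\<in>{2..n-1}. k * tcut \<tau> ds \<rho> j powr r \<le> tpair \<tau> ds \<rho> j powr r) \<longrightarrow>
     tcut \<tau> ds \<rho> 1 powr \<alpha> \<ge>
        l * (\<Sum>j=2..n-1. p powr (real (j - 2) * \<alpha> / r) * tpair \<tau> ds \<rho> j powr \<alpha>)
      + p powr (real (n - 2) * \<alpha> / r) * tpair \<tau> ds \<rho> n powr \<alpha>)"
proof (cases "2 \<le> n")
  case True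
  let ?R = "tpair \<tau> ds \<rho>" and ?C = "tcut \<tau> ds \<rho>"
  interpret monogamy_chain ?R ?C n k p r \<alpha> l
  proof
    show "0 \<le> ?R i \<and> 0 \<le> ?C i" if "2 \<le> i" "i < n" for i
      using that len tpair_nonneg[OF nonneg state] tcut_nonneg[OF nonneg state] by simp
    show "?R i + ?C i \<le> ?C (i - 1)" if "2 \<le> i" "i < n" for i
      using that len tpair_add_tcut_le[OF mono state, of "i - 1"] by simp
    show "?C (n - 1) = ?R n"
      using True len tcut_last by blast
  qed (use k p r \<alpha> l_def in auto)
  show ?thesis
    using chain_bound chain_bound_pairs_small chain_bound_cuts_small by auto
qed simp

end
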